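(* Consider a batched algorithm with $B$ batches and allocation functions $w_t:((\Delta_{\mathcal X})^K)^{t-1}\to\Delta_K$, $t\in[B]$: in batch $t$ each arm $a$ is pulled exactly $w_t(a)(Q^{t-1})T/B$ times, $Q_{t,a}$ is the empirical distribution of arm $a$'s samples in batch $t$, and after the $T$ samples the algorithm outputs an index $\hat i\in\arg\min_{i\in[m]}\sum_{t=1}^B\sum_{a}w_t(a)(Q^{t-1})D(Q_{t,a}\|\nu^i_a)$ (maximum likelihood, ties broken arbitrarily). Suppose that for every $Q^B=(Q_1,\dots,Q_B)\in((\Delta_{\mathcal X})^K)^B$, $$\max_{j\in[m]}\ \min_{i\ne j}\ \frac1B\sum_{t=1}^B\sum_{a=1}^Kw_t(a)(Q^{t-1})\,D(Q_{t,a}\|\nu^i_a)\ \ge R.$$ Then the minimal error exponent of this algorithm satisfies $e_m\ge R$. *)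

theory Defs
  imports "HOL-Probability.Probability"
begin

text \<open>Setting: finite alphabet 'x, finite set of arms 'a (so K = CARD('a)),
 hypotheses indexed by i < m; hypothesis i is nu i :: 'a => 'x pmf.
 A batch outcome is an element of (Delta_X)^K, i.e. a function 'a => 'x pmf.
 A history Q^t is a list of batch outcomes of length t.\<close>

definition KL :: "'x::finite pmf \<Rightarrow> 'x pmf \<Rightarrow> ereal" where
  "KL P Q = (if (\<forall>x. pmf Q x = 0 \<longrightarrow> pmf P x = 0)
             then ereal (\<Sum>x\<in>{x. pmf P x > 0}. pmf P x * ln (pmf P x / pmf Q x))
             else \<infinity>)"

text \<open>Empirical distribution of a sample (uniform by convention for an empty sample;
 such a sample only arises for arms with zero allocation).\<close>
definition empirical :: "'x::finite list \<Rightarrow> 'x pmf" where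
  "empirical xs = (if xs = [] then pmf_of_set UNIV else pmf_of_multiset (mset xs))"

text \<open>Number of pulls of an arm with allocation weight wa in a batch of n = T/B samples.\<close>
definition pulls :: "nat \<Rightarrow> real \<Rightarrow> nat" where
  "pulls n wa = nat \<lceil>wa * real n\<rceil>"

definition valid_alloc ::
  "nat \<Rightarrow> (nat \<Rightarrow> ('a::finite \<Rightarrow> 'x pmf) list \<Rightarrow> 'a \<Rightarrow> real) \<Rightarrow> bool" where
  "valid_alloc B w \<longleftrightarrow> (\<forall>t\<in>{1..B}. \<forall>H. length H = t - 1 \<longrightarrow>
      (\<forall>a. w t H a \<ge> 0) \<and> (\<Sum>a\<in>UNIV. w t H a) = 1)"

definition batch_pmf ::
  "nat \<Rightarrow> ('a::finite \<Rightarrow> real) \<Rightarrow> ('a \<Rightarrow> 'x::finite pmf) \<Rightarrow> ('a \<Rightarrow> 'x pmf) pmf" where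
  "batch_pmf n wt nu =
     Pi_pmf UNIV undefined (\<lambda>a. map_pmf empirical (replicate_pmf (pulls n (wt a)) (nu a)))"

fun history_pmf ::
  "(nat \<Rightarrow> ('a::finite \<Rightarrow> 'x::finite pmf) list \<Rightarrow> 'a \<Rightarrow> real) \<Rightarrow> nat \<Rightarrow>
   ('a \<Rightarrow> 'x pmf) \<Rightarrow> nat \<Rightarrow> ('a \<Rightarrow> 'x pmf) list pmf" where
  "history_pmf w n nu 0 = return_pmf []"
| "history_pmf w n nu (Suc t) =
     bind_pmf (history_pmf w n nu t)
       (\<lambda>H. map_pmf (\<lambda>Qt. H @ [Qt]) (batch_pmf n (w (Suc t) H) nu))"

definition score ::
  "nat \<Rightarrow> (nat \<Rightarrow> ('a::finite \<Rightarrow> 'x::finite pmf) list \<Rightarrow> 'a \<Rightarrow> real) \<Rightarrow>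
   (nat \<Rightarrow> 'a \<Rightarrow> 'x pmf) \<Rightarrow> nat \<Rightarrow> ('a \<Rightarrow> 'x pmf) list \<Rightarrow> ereal" where
  "score B w nu i Q = (\<Sum>t\<in>{1..B}. \<Sum>a\<in>UNIV.
      ereal (w t (take (t - 1) Q) a) * KL ((Q ! (t - 1)) a) (nu i a))"

definition maxlik_rule ::
  "nat \<Rightarrow> nat \<Rightarrow> (nat \<Rightarrow> ('a::finite \<Rightarrow> 'x::finite pmf) list \<Rightarrow> 'a \<Rightarrow> real) \<Rightarrow>
   (nat \<Rightarrow> 'a \<Rightarrow> 'x pmf) \<Rightarrow> (('a \<Rightarrow> 'x pmf) list \<Rightarrow> nat) \<Rightarrow> bool" where
  "maxlik_rule m B w nu dec \<longleftrightarrow> (\<forall>Q. length Q = B \<longrightarrow>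
      dec Q < m \<and> (\<forall>i<m. score B w nu (dec Q) Q \<le> score B w nu i Q))"

definition err_prob ::
  "nat \<Rightarrow> (nat \<Rightarrow> ('a::finite \<Rightarrow> 'x::finite pmf) list \<Rightarrow> 'a \<Rightarrow> real) \<Rightarrow>
   (nat \<Rightarrow> 'a \<Rightarrow> 'x pmf) \<Rightarrow> (('a \<Rightarrow> 'x pmf) list \<Rightarrow> nat) \<Rightarrow> nat \<Rightarrow> nat \<Rightarrow> real" where
  "err_prob B w nu dec j n = measure_pmf.prob (history_pmf w n (nu j) B) {Q. dec Q \<noteq> j}"

definition neglog :: "real \<Rightarrow> ereal" where
  "neglog p = (if p = 0 then \<infinity> else ereal (- ln p))"

text \<open>Error exponent under hypothesis j: liminf_{T\<rightarrow>\<infinity>} -(1/T) log P_j(error), T = B*n.\<close>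
definition err_exponent ::
  "nat \<Rightarrow> (nat \<Rightarrow> ('a::finite \<Rightarrow> 'x::finite pmf) list \<Rightarrow> 'a \<Rightarrow> real) \<Rightarrow>
   (nat \<Rightarrow> 'a \<Rightarrow> 'x pmf) \<Rightarrow> (('a \<Rightarrow> 'x pmf) list \<Rightarrow> nat) \<Rightarrow> nat \<Rightarrow> ereal" where
  "err_exponent B w nu dec j =
     liminf (\<lambda>n. neglog (err_prob B w nu dec j n) / ereal (real (B * n)))"

definition min_err_exponent ::
  "nat \<Rightarrow> nat \<Rightarrow> (nat \<Rightarrow> ('a::finite \<Rightarrow> 'x::finite pmf) list \<Rightarrow> 'a \<Rightarrow> real) \<Rightarrow>
   (nat \<Rightarrow> 'a \<Rightarrow> 'x pmf) \<Rightarrow> (('a \<Rightarrow> 'x pmf) list \<Rightarrow> nat) \<Rightarrow> ereal" where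
  "min_err_exponent m B w nu dec = (INF j\<in>{..<m}. err_exponent B w nu dec j)"

end

theory Submission
  imports Defs "HOL-Real_Asymp.Real_Asymp"
begin

text \<open>
  Method of types. A sample of N i.i.d. draws from p has empirical distribution P with
  probability at most exp (-N D(P || p)), because every sequence of type P is exactly
  exp (-N D(P || p)) times less likely under p than under P. Since arm a is pulled at least
  w_t(a) n times in batch t (n = T/B), the chain rule bounds the probability of any history
  Q^B under hypothesis j by exp (-n score_j(Q^B)). If the maximum-likelihood decision on Q^B
  is not j, the separation hypothesis forces score_j(Q^B) \<ge> B R, whichever index attains
  the maximum. Finally only polynomially many histories (n + 1)^(|X| K B) have positive
  probability, so the error probability is at most poly(n) exp (-T R).
\<close>

lemma pmf_replicate_pmf:
  "pmf (replicate_pmf N p) xs = (if length xs = N then prod_list (map (pmf p) xs) else 0)"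
proof (induction N arbitrary: xs)
  case 0
  then show ?case by (auto simp: pmf_return)
next
  case (Suc N)
  have replicate_Suc:
    "replicate_pmf (Suc N) p = map_pmf (\<lambda>(x, xs). x # xs) (pair_pmf p (replicate_pmf N p))"
    by (simp add: pair_pmf_def map_bind_pmf map_return_pmf)
  show ?case
  proof (cases xs)
    case Nil
    then show ?thesis by (simp add: pmf_eq_0_set_pmf set_replicate_pmf)
  next
    case (Cons y ys)
    have inj: "inj (\<lambda>(x::'a, xs). x # xs)" by (auto simp: inj_def)
    have "pmf (replicate_pmf (Suc N) p) xs = pmf p y * pmf (replicate_pmf N p) ys"
      unfolding replicate_Suc Cons
      using pmf_map_inj'[OF inj, of "pair_pmf p (replicate_pmf N p)" "(y, ys)"]
      by (simp add: pmf_pair)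
    then show ?thesis using Suc.IH[of ys] Cons by simp
  qed
qed

lemma prod_list_map_eq_prod_count:
  fixes f :: "'x::finite \<Rightarrow> 'b::comm_monoid_mult"
  shows "prod_list (map f xs) = (\<Prod>x\<in>UNIV. f x ^ count (mset xs) x)"
proof -
  have "prod_list (map f xs) = (\<Prod>x\<in>set_mset (mset xs). f x ^ count (mset xs) x)"
    by (simp flip: prod_mset_prod_list add: image_prod_mset_multiplicity)
  also have "\<dots> = (\<Prod>x\<in>UNIV. f x ^ count (mset xs) x)"
    by (rule prod.mono_neutral_left) (simp_all add: count_mset_0_iff[THEN iffD2])
  finally show ?thesis .
qed

lemma pmf_empirical:
  "xs \<noteq> [] \<Longrightarrow> pmf (empirical xs) x = count (mset xs) x / length xs"
  by (simp add: empirical_def)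

lemma count_eq_if_empirical:
  assumes "length xs = N" "N > 0" "empirical xs = P"
  shows "real (count (mset xs) x) = real N * pmf P x"
  using assms by (auto simp: pmf_empirical)

lemma KL_nonneg: "0 \<le> KL P (p :: 'x::finite pmf)"
proof (cases "\<forall>x. pmf p x = 0 \<longrightarrow> pmf P x = 0")
  case True
  define S where "S = {x. pmf P x > 0}"
  have "(\<Sum>x\<in>S. pmf P x - pmf p x) \<le> (\<Sum>x\<in>S. pmf P x * ln (pmf P x / pmf p x))"
  proof (rule sum_mono)
    fix x assume "x \<in> S"
    then have P: "pmf P x > 0" by (simp add: S_def)
    with True have p: "pmf p x > 0" by (metis pmf_nonneg order_le_less)
    have "ln (pmf p x / pmf P x) \<le> pmf p x / pmf P x - 1"
      using P p by (intro ln_le_minus_one) auto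
    with P p have "pmf P x * (1 - pmf p x / pmf P x) \<le> pmf P x * ln (pmf P x / pmf p x)"
      by (intro mult_left_mono) (auto simp: ln_div)
    also have "pmf P x * (1 - pmf p x / pmf P x) = pmf P x - pmf p x"
      using P by (simp add: field_simps)
    finally show "pmf P x - pmf p x \<le> pmf P x * ln (pmf P x / pmf p x)" .
  qed
  moreover have "(\<Sum>x\<in>S. pmf P x) = 1"
    by (rule sum_pmf_eq_1) (auto simp: S_def set_pmf_eq')
  moreover have "(\<Sum>x\<in>S. pmf p x) \<le> 1"
    using sum_mono2[of UNIV S "pmf p"] sum_pmf_eq_1[of UNIV p] by simp
  ultimately have "0 \<le> (\<Sum>x\<in>S. pmf P x * ln (pmf P x / pmf p x))"
    by (simp add: sum_subtractf)
  with True show ?thesis by (simp add: KL_def S_def)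
qed (auto simp: KL_def)

lemma ereal_le_neglog_iff:
  assumes "0 \<le> p"
  shows "ereal r \<le> neglog p \<longleftrightarrow> p \<le> exp (- r)"
proof (cases "p = 0")
  case False
  with assms have "p > 0" by simp
  then have "p \<le> exp (- r) \<longleftrightarrow> ln p \<le> - r"
    by (metis exp_ln exp_le_cancel_iff)
  with False show ?thesis by (auto simp: neglog_def)
qed (simp add: neglog_def)

lemma neglog_mult:
  "0 \<le> a \<Longrightarrow> 0 \<le> b \<Longrightarrow> neglog (a * b) = neglog a + neglog b"
  by (auto simp: neglog_def ln_mult)

lemma neglog_prod:
  "(\<And>x. x \<in> A \<Longrightarrow> 0 \<le> f x) \<Longrightarrow> neglog (\<Prod>x\<in>A. f x) = (\<Sum>x\<in>A. neglog (f x))"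
proof (induction A rule: infinite_finite_induct)
  case (insert x F)
  then show ?case by (simp add: neglog_mult prod_nonneg)
qed (simp_all add: neglog_def zero_ereal_def)

lemma neglog_nonneg: "0 \<le> p \<Longrightarrow> p \<le> 1 \<Longrightarrow> 0 \<le> neglog p"
  by (simp add: neglog_def)

lemma pmf_replicate_pmf_type_class:
  assumes xs: "length xs = N" "N > 0" "empirical xs = P" and KL: "KL P p = ereal D"
  shows "pmf (replicate_pmf N p) xs = exp (- (real N * D)) * pmf (replicate_pmf N P) xs"
proof -
  define S where "S = {x. pmf P x > 0}"
  have count: "real (count (mset xs) x) = real N * pmf P x" for x
    using xs by (rule count_eq_if_empirical)
  have supp: "pmf p x > 0" if "x \<in> S" for x
    using KL that
    by (auto simp: KL_def S_def split: if_splits intro: order.not_eq_order_implies_strict)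
  have outside_S: "count (mset xs) x = 0" if "x \<notin> S" for x
    using that count[of x] by (simp add: S_def order_less_le)
  have on_S: "pmf (replicate_pmf N q) xs = (\<Prod>x\<in>S. pmf q x ^ count (mset xs) x)" for q
  proof -
    have "pmf (replicate_pmf N q) xs = (\<Prod>x\<in>UNIV. pmf q x ^ count (mset xs) x)"
      using xs by (simp add: pmf_replicate_pmf prod_list_map_eq_prod_count)
    also have "\<dots> = (\<Prod>x\<in>S. pmf q x ^ count (mset xs) x)"
      by (intro prod.mono_neutral_right) (simp_all add: outside_S)
    finally show ?thesis .
  qed
  have factor: "pmf p x ^ count (mset xs) x
      = exp (- (real N * (pmf P x * ln (pmf P x / pmf p x)))) * pmf P x ^ count (mset xs) x"
    if "x \<in> S" for x
  proof -
    have P: "pmf P x > 0" and p: "pmf p x > 0"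
      using that supp by (auto simp: S_def)
    have "(pmf p x / pmf P x) ^ count (mset xs) x
        = exp (real (count (mset xs) x) * ln (pmf p x / pmf P x))"
      using P p by (simp add: exp_of_nat_mult)
    also have "real (count (mset xs) x) * ln (pmf p x / pmf P x)
        = - (real N * (pmf P x * ln (pmf P x / pmf p x)))"
      using P p by (simp add: count ln_div algebra_simps)
    finally show ?thesis
      using P by (simp add: power_divide field_simps)
  qed
  have D: "D = (\<Sum>x\<in>S. pmf P x * ln (pmf P x / pmf p x))"
    using KL by (auto simp: KL_def S_def split: if_splits)
  show ?thesis
    by (simp add: on_S factor prod.distrib exp_sum D sum_distrib_left flip: sum_negf)
qed

lemma pmf_replicate_pmf_type_class_eq_0:
  assumes xs: "length xs = N" "N > 0" "empirical xs = P" and KL: "KL P p = \<infinity>"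
  shows "pmf (replicate_pmf N p) xs = 0"
proof -
  obtain x where "x \<notin> set_pmf p" "pmf P x \<noteq> 0"
    using KL by (auto simp: KL_def set_pmf_iff split: if_splits)
  moreover have "real (count (mset xs) x) \<noteq> 0"
    using count_eq_if_empirical[OF xs, of x] \<open>pmf P x \<noteq> 0\<close> \<open>N > 0\<close> by simp
  ultimately have "xs \<notin> set_pmf (replicate_pmf N p)"
    by (auto simp: set_replicate_pmf)
  then show ?thesis by (simp add: pmf_eq_0_set_pmf)
qed

lemma pmf_map_empirical_replicate_pmf:
  "pmf (map_pmf empirical (replicate_pmf N q)) P
     = (\<Sum>xs\<in>{xs. length xs = N \<and> empirical xs = P}. pmf (replicate_pmf N q) xs)"
proof -
  let ?M = "replicate_pmf N q" and ?A = "{xs. length xs = N \<and> empirical xs = P}"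
  have "finite ?A"
    using finite_lists_length_eq[of "UNIV :: 'a set" N] by (rule finite_subset[rotated]) auto
  have "empirical -` {P} \<inter> set_pmf ?M = ?A \<inter> set_pmf ?M"
    by (auto simp: set_replicate_pmf)
  then have "measure ?M (empirical -` {P}) = measure ?M ?A"
    by (metis measure_Int_set_pmf)
  with \<open>finite ?A\<close> show ?thesis by (simp add: pmf_map measure_measure_pmf_finite)
qed

lemma KL_le_neglog_pmf_empirical:
  "ereal (real N) * KL P p \<le> neglog (pmf (map_pmf empirical (replicate_pmf N p)) P)"
proof -
  consider "N = 0" | "N > 0" "KL P p = \<infinity>" | D where "N > 0" "KL P p = ereal D"
    using KL_nonneg[of P p] by (cases "KL P p") auto
  then show ?thesis
  proof cases
    case 1
    then show ?thesis
      by (simp add: neglog_nonneg pmf_le_1 flip: zero_ereal_def)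
  next
    case 2
    then show ?thesis
      by (simp add: pmf_map_empirical_replicate_pmf pmf_replicate_pmf_type_class_eq_0 neglog_def)
  next
    case (3 D)
    have "pmf (map_pmf empirical (replicate_pmf N p)) P
        = exp (- (real N * D)) * pmf (map_pmf empirical (replicate_pmf N P)) P"
      using 3 by (simp add: pmf_map_empirical_replicate_pmf pmf_replicate_pmf_type_class
          sum_distrib_left)
    also have "\<dots> \<le> exp (- (real N * D))"
      by (simp add: pmf_le_1)
    finally show ?thesis
      using 3 by (simp add: ereal_le_neglog_iff)
  qed
qed

lemma pulls_ge: "wa * real n \<le> real (pulls n wa)"
  unfolding pulls_def by linarith

lemma pulls_le:
  assumes "wa \<le> 1"
  shows "pulls n wa \<le> n"
proof -
  have "wa * real n \<le> real n"
    using mult_right_mono[OF assms, of "real n"] by simp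
  then show ?thesis unfolding pulls_def by simp
qed

lemma valid_allocD:
  assumes "valid_alloc B w" "t \<in> {1..B}" "length H = t - 1"
  shows "0 \<le> w t H a" and "w t H a \<le> 1"
proof -
  have nonneg: "\<forall>a. 0 \<le> w t H a" and sum: "(\<Sum>a\<in>UNIV. w t H a) = 1"
    using assms unfolding valid_alloc_def by auto
  then show "0 \<le> w t H a" by simp
  from nonneg have "w t H a \<le> (\<Sum>a\<in>UNIV. w t H a)"
    by (intro member_le_sum) auto
  with sum show "w t H a \<le> 1" by simp
qed

lemma weighted_KL_nonneg:
  "(\<And>a. 0 \<le> wt a) \<Longrightarrow> 0 \<le> (\<Sum>a\<in>A. ereal (wt a) * KL (Q a) (nu a))"
  by (intro sum_nonneg) (simp add: KL_nonneg ereal_zero_le_0_iff)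

lemma neglog_pmf_batch_pmf_ge:
  fixes nu :: "'a::finite \<Rightarrow> 'x::finite pmf"
  assumes "\<And>a. 0 \<le> wt a"
  shows "ereal (real n) * (\<Sum>a\<in>UNIV. ereal (wt a) * KL (Q a) (nu a))
    \<le> neglog (pmf (batch_pmf n wt nu) Q)"
proof -
  let ?arm = "\<lambda>a. map_pmf empirical (replicate_pmf (pulls n (wt a)) (nu a))"
  have "ereal (real n) * (\<Sum>a\<in>UNIV. ereal (wt a) * KL (Q a) (nu a))
      = (\<Sum>a\<in>UNIV. ereal (real n) * (ereal (wt a) * KL (Q a) (nu a)))"
    using assms by (intro sum_ereal_right_distrib) (simp add: KL_nonneg ereal_zero_le_0_iff)
  also have "\<dots> = (\<Sum>a\<in>UNIV. ereal (wt a * real n) * KL (Q a) (nu a))"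
    by (intro sum.cong refl) (metis mult.assoc mult.commute times_ereal.simps(1))
  also have "\<dots> \<le> (\<Sum>a\<in>UNIV. ereal (real (pulls n (wt a))) * KL (Q a) (nu a))"
    using pulls_ge KL_nonneg by (intro sum_mono ereal_mult_right_mono) auto
  also have "\<dots> \<le> (\<Sum>a\<in>UNIV. neglog (pmf (?arm a) (Q a)))"
    by (intro sum_mono KL_le_neglog_pmf_empirical)
  also have "\<dots> = neglog (pmf (batch_pmf n wt nu) Q)"
    by (simp add: batch_pmf_def pmf_Pi neglog_prod)
  finally show ?thesis .
qed

lemma pmf_history_pmf_snoc:
  "pmf (history_pmf w n nu (Suc t)) (H @ [Q])
     = pmf (history_pmf w n nu t) H * pmf (batch_pmf n (w (Suc t) H) nu) Q"
proof -
  have "pmf (map_pmf (\<lambda>Q. H' @ [Q]) (batch_pmf n (w (Suc t) H') nu)) (H @ [Q])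
      = indicator {H} H' * pmf (batch_pmf n (w (Suc t) H) nu) Q" for H'
  proof (cases "H' = H")
    case True
    have "inj (\<lambda>Q. H @ [Q])" by (auto simp: inj_def)
    from pmf_map_inj'[OF this] True show ?thesis by simp
  qed (subst pmf_map_outside, auto)
  then show ?thesis
    by (simp add: pmf_bind measure_pmf_single)
qed

lemma score_snoc:
  assumes "length H = t"
  shows "score (Suc t) w nu i (H @ [Q])
    = score t w nu i H + (\<Sum>a\<in>UNIV. ereal (w (Suc t) H a) * KL (Q a) (nu i a))"
proof -
  have "score t w nu i (H @ [Q]) = score t w nu i H"
    unfolding score_def using assms by (intro sum.cong refl) (auto simp: nth_append)
  then show ?thesis
    using assms by (simp add: score_def nth_append)
qed

lemma score_nonneg:
  assumes "valid_alloc B w" "t \<le> B" "length H = t"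
  shows "0 \<le> score t w nu i H"
  unfolding score_def using assms valid_allocD(1)[OF assms(1)]
  by (intro sum_nonneg weighted_KL_nonneg) auto

lemma neglog_pmf_history_pmf_ge:
  assumes "valid_alloc B w"
  shows "t \<le> B \<Longrightarrow> length H = t
    \<Longrightarrow> ereal (real n) * score t w nu i H \<le> neglog (pmf (history_pmf w n (nu i) t) H)"
proof (induction t arbitrary: H)
  case 0
  then show ?case by (simp add: score_def neglog_def flip: zero_ereal_def)
next
  case (Suc t)
  then obtain H' Q where H: "H = H' @ [Q]" and len: "length H' = t"
    by (metis length_Suc_conv_rev)
  let ?batch = "\<Sum>a\<in>UNIV. ereal (w (Suc t) H' a) * KL (Q a) (nu i a)"
  have w_nonneg: "0 \<le> w (Suc t) H' a" for a
    using Suc.prems len by (intro valid_allocD(1)[OF assms]) auto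
  have "ereal (real n) * score (Suc t) w nu i H
      = ereal (real n) * score t w nu i H' + ereal (real n) * ?batch"
    unfolding H score_snoc[OF len] using Suc.prems len
    by (intro ereal_right_distrib score_nonneg[OF assms] weighted_KL_nonneg w_nonneg) auto
  also have "\<dots> \<le> neglog (pmf (history_pmf w n (nu i) t) H')
      + neglog (pmf (batch_pmf n (w (Suc t) H') (nu i)) Q)"
    using Suc.prems len by (intro add_mono Suc.IH neglog_pmf_batch_pmf_ge w_nonneg) auto
  also have "\<dots> = neglog (pmf (history_pmf w n (nu i) (Suc t)) H)"
    unfolding H pmf_history_pmf_snoc by (simp add: neglog_mult)
  finally show ?case .
qed

definition empirical_dists :: "nat \<Rightarrow> 'x::finite pmf set" where
  "empirical_dists n = empirical ` {xs. length xs \<le> n}"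

lemma finite_empirical_dists: "finite (empirical_dists n :: 'x::finite pmf set)"
  unfolding empirical_dists_def
  using finite_lists_length_le[of "UNIV :: 'x set" n] by simp

lemma card_empirical_dists: "card (empirical_dists n :: 'x::finite pmf set) \<le> (n + 1) ^ CARD('x)"
proof -
  let ?S = "{xs :: 'x list. length xs \<le> n}"
  have fin: "finite ?S"
    using finite_lists_length_le[of "UNIV :: 'x set" n] by simp
  define h :: "'x multiset \<Rightarrow> 'x pmf"
    where "h M = (if M = {#} then pmf_of_set UNIV else pmf_of_multiset M)" for M
  have "empirical = h \<circ> mset"
    by (auto simp: fun_eq_iff empirical_def h_def)
  then have "empirical_dists n = h ` mset ` ?S"
    unfolding empirical_dists_def by (simp add: image_comp)
  then have "card (empirical_dists n :: 'x pmf set) \<le> card (mset ` ?S)"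
    using fin by (simp add: card_image_le)
  also have "\<dots> = card (count ` mset ` ?S)"
    by (rule card_image[symmetric]) (auto intro: inj_onI simp: count_inject)
  also have "\<dots> \<le> card (UNIV \<rightarrow>\<^sub>E {..n} :: ('x \<Rightarrow> nat) set)"
  proof (intro card_mono)
    show "count ` mset ` ?S \<subseteq> UNIV \<rightarrow>\<^sub>E {..n}"
    proof
      fix c assume "c \<in> count ` mset ` ?S"
      then obtain xs :: "'x list" where "length xs \<le> n" "c = count (mset xs)"
        by auto
      then show "c \<in> UNIV \<rightarrow>\<^sub>E {..n}"
        using count_le_size[of "mset xs"] by (auto intro: order.trans)
    qed
  qed (simp add: finite_PiE)
  also have "\<dots> = (n + 1) ^ CARD('x)"
    by (simp add: card_funcsetE)
  finally show ?thesis .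
qed

definition histories :: "nat \<Rightarrow> nat \<Rightarrow> ('a::finite \<Rightarrow> 'x::finite pmf) list set" where
  "histories n t = {H. set H \<subseteq> UNIV \<rightarrow>\<^sub>E empirical_dists n \<and> length H = t}"

lemma finite_histories: "finite (histories n t)"
  unfolding histories_def by (intro finite_lists_length_eq finite_PiE finite_empirical_dists) simp

lemma card_histories:
  "card (histories n t :: ('a::finite \<Rightarrow> 'x::finite pmf) list set)
     \<le> (n + 1) ^ (CARD('x) * CARD('a) * t)"
proof -
  have "card (histories n t :: ('a \<Rightarrow> 'x pmf) list set)
      = (card (empirical_dists n :: 'x pmf set) ^ CARD('a)) ^ t"
    unfolding histories_def
    by (simp add: card_lists_length_eq finite_PiE finite_empirical_dists card_funcsetE)
  also have "\<dots> \<le> (((n + 1) ^ CARD('x)) ^ CARD('a)) ^ t"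
    by (intro power_mono card_empirical_dists) simp_all
  finally show ?thesis
    by (simp add: power_mult)
qed

lemma set_pmf_history_pmf_subset:
  fixes nu :: "'a::finite \<Rightarrow> 'x::finite pmf"
  assumes "valid_alloc B w"
  shows "t \<le> B \<Longrightarrow> set_pmf (history_pmf w n nu t) \<subseteq> histories n t"
proof (induction t)
  case 0
  then show ?case by (simp add: histories_def)
next
  case (Suc t)
  show ?case
  proof
    fix H' assume "H' \<in> set_pmf (history_pmf w n nu (Suc t))"
    then obtain H Q where H: "H \<in> set_pmf (history_pmf w n nu t)"
      and Q: "Q \<in> set_pmf (batch_pmf n (w (Suc t) H) nu)" and H': "H' = H @ [Q]"
      by auto
    have "H \<in> histories n t" using H Suc by auto
    moreover have "Q a \<in> empirical_dists n" for a
    proof -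
      obtain xs where xs: "length xs = pulls n (w (Suc t) H a)" "Q a = empirical xs"
        using Q by (auto simp: batch_pmf_def set_Pi_pmf PiE_dflt_def set_replicate_pmf)
      have "length H = t" using \<open>H \<in> histories n t\<close> by (simp add: histories_def)
      then have "pulls n (w (Suc t) H a) \<le> n"
        using Suc.prems by (intro pulls_le valid_allocD(2)[OF assms]) auto
      with xs show ?thesis by (auto simp: empirical_dists_def)
    qed
    ultimately show "H' \<in> histories n (Suc t)"
      using H' by (auto simp: histories_def)
  qed
qed

lemma le_of_le_SUP_INF_others:
  fixes s :: "'i \<Rightarrow> 'b::complete_linorder"
  assumes "finite I" and r: "r \<le> (SUP k\<in>I. INF i\<in>I - {k}. s i)"
    and d: "d \<in> I" "\<forall>i\<in>I. s d \<le> s i" and j: "j \<in> I" "j \<noteq> d"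
  shows "r \<le> s j"
proof -
  have "\<exists>k\<in>I. r \<le> (INF i\<in>I - {k}. s i)"
  proof (rule ccontr)
    assume "\<not> ?thesis"
    then have "(SUP k\<in>I. INF i\<in>I - {k}. s i) < r"
      using \<open>finite I\<close> d(1) by (intro finite_imp_Sup_less) (auto simp: not_le)
    with r show False by simp
  qed
  then obtain k where k: "k \<in> I" "r \<le> (INF i\<in>I - {k}. s i)" ..
  show ?thesis
  proof (cases "k = d")
    case True
    with k j show ?thesis by (auto intro: order.trans INF_lower)
  next
    case False
    with k d have "r \<le> s d" by (auto intro: order.trans INF_lower)
    with d j show ?thesis by (auto intro: order.trans)
  qed
qed

lemma score_ge_if_error:
  assumes "B > 0" and maxlik: "maxlik_rule m B w nu dec"
    and sep: "(SUP k\<in>{..<m}. INF i\<in>{..<m} - {k}. score B w nu i Q / ereal (real B)) \<ge> ereal R"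
    and Q: "length Q = B" and j: "j < m" "dec Q \<noteq> j"
  shows "ereal (real B * R) \<le> score B w nu j Q"
proof -
  have "dec Q < m" "\<forall>i<m. score B w nu (dec Q) Q \<le> score B w nu i Q"
    using maxlik Q by (auto simp: maxlik_rule_def)
  with \<open>B > 0\<close> have "ereal R \<le> score B w nu j Q / ereal (real B)"
    by (intro le_of_le_SUP_INF_others[OF _ sep, where d = "dec Q"]) (use j in auto)
  with \<open>B > 0\<close> show ?thesis
    by (simp add: ereal_le_divide_pos)
qed

lemma err_prob_le:
  fixes nu :: "nat \<Rightarrow> 'a::finite \<Rightarrow> 'x::finite pmf"
  assumes "B > 0" "valid_alloc B w" "maxlik_rule m B w nu dec"
    and sep: "\<forall>Q. length Q = B \<longrightarrow>
      (SUP k\<in>{..<m}. INF i\<in>{..<m} - {k}. score B w nu i Q / ereal (real B)) \<ge> ereal R"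
    and "j < m"
  shows "err_prob B w nu dec j n
    \<le> real ((n + 1) ^ (CARD('x) * CARD('a) * B)) * exp (- (real B * real n * R))"
proof -
  let ?M = "history_pmf w n (nu j) B"
  let ?E = "histories n B \<inter> {Q. dec Q \<noteq> j}"
  have "{Q. dec Q \<noteq> j} \<inter> set_pmf ?M = ?E \<inter> set_pmf ?M"
    using set_pmf_history_pmf_subset[OF assms(2) order.refl] by blast
  then have "err_prob B w nu dec j n = measure ?M ?E"
    unfolding err_prob_def by (metis measure_Int_set_pmf)
  also have "\<dots> = (\<Sum>Q\<in>?E. pmf ?M Q)"
    by (simp add: measure_measure_pmf_finite finite_histories)
  also have "\<dots> \<le> (\<Sum>Q\<in>?E. exp (- (real B * real n * R)))"
  proof (rule sum_mono)
    fix Q assume "Q \<in> ?E"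
    then have Q: "length Q = B" "dec Q \<noteq> j" by (auto simp: histories_def)
    have "ereal (real n) * ereal (real B * R) \<le> ereal (real n) * score B w nu j Q"
      using score_ge_if_error[OF assms(1,3) sep[rule_format, OF Q(1)] Q(1) \<open>j < m\<close> Q(2)]
      by (rule ereal_mult_left_mono) simp
    also have "\<dots> \<le> neglog (pmf ?M Q)"
      using Q(1) by (intro neglog_pmf_history_pmf_ge[OF assms(2)]) simp_all
    finally show "pmf ?M Q \<le> exp (- (real B * real n * R))"
      by (simp add: ereal_le_neglog_iff mult_ac)
  qed
  also have "\<dots> \<le> real (card (histories n B :: ('a \<Rightarrow> 'x pmf) list set))
      * exp (- (real B * real n * R))"
    by (simp add: card_mono finite_histories)
  also have "\<dots> \<le> real ((n + 1) ^ (CARD('x) * CARD('a) * B))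
      * exp (- (real B * real n * R))"
    by (intro mult_right_mono of_nat_mono card_histories) simp
  finally show ?thesis .
qed

lemma liminf_neglog_div_ge:
  fixes e :: "nat \<Rightarrow> real"
  assumes "c > 0" and e_nonneg: "\<And>n. 0 \<le> e n"
    and e_le: "\<And>n. e n \<le> real ((n + 1) ^ d) * exp (- (c * real n * R))"
  shows "ereal R \<le> liminf (\<lambda>n. neglog (e n) / ereal (c * real n))"
proof -
  define g where "g n = R - real d * ln (real n + 1) / (c * real n)" for n
  have "g = (\<lambda>n. R - real d / c * (ln (real n + 1) / real n))"
    by (simp add: fun_eq_iff g_def)
  moreover have "(\<lambda>n. ln (real n + 1) / real n) \<longlonglongrightarrow> 0"
    by real_asymp
  ultimately have "g \<longlonglongrightarrow> R - real d / c * 0"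
    by (simp only:) (intro tendsto_intros)
  then have "(\<lambda>n. ereal (g n)) \<longlonglongrightarrow> ereal R"
    by (intro tendsto_ereal) simp
  from lim_imp_Liminf[OF _ this] have "ereal R = liminf (\<lambda>n. ereal (g n))"
    by simp
  also have "\<dots> \<le> liminf (\<lambda>n. neglog (e n) / ereal (c * real n))"
  proof (intro Liminf_mono eventually_mono[OF eventually_ge_at_top[of 1]])
    fix n :: nat assume "1 \<le> n"
    with \<open>c > 0\<close> have cn: "c * real n > 0" by simp
    have "e n \<le> exp (real d * ln (real n + 1)) * exp (- (c * real n * R))"
      using e_le[of n] by (simp add: exp_of_nat_mult add.commute)
    also have "\<dots> = exp (- (c * real n * g n))"
      using cn \<open>c > 0\<close> by (simp add: g_def right_diff_distrib flip: exp_add)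
    finally show "ereal (g n) \<le> neglog (e n) / ereal (c * real n)"
      using cn e_nonneg[of n] by (simp add: ereal_le_divide_pos ereal_le_neglog_iff)
  qed
  finally show ?thesis .
qed

theorem mainTheorem12:
  fixes m B :: nat
    and nu :: "nat \<Rightarrow> 'a::finite \<Rightarrow> 'x::finite pmf"
    and w :: "nat \<Rightarrow> ('a \<Rightarrow> 'x pmf) list \<Rightarrow> 'a \<Rightarrow> real"
    and dec :: "('a \<Rightarrow> 'x pmf) list \<Rightarrow> nat"
    and R :: real
  assumes "B > 0"
    and "valid_alloc B w"
    and "maxlik_rule m B w nu dec"
    and "\<forall>Q. length Q = B \<longrightarrow>
           (SUP j\<in>{..<m}. INF i\<in>{..<m} - {j}. score B w nu i Q / ereal (real B)) \<ge> ereal R"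
  shows "min_err_exponent m B w nu dec \<ge> ereal R"
  unfolding min_err_exponent_def
proof (rule INF_greatest)
  fix j assume "j \<in> {..<m}"
  then have "err_prob B w nu dec j n
      \<le> real ((n + 1) ^ (CARD('x) * CARD('a) * B)) * exp (- (real B * real n * R))" for n
    using err_prob_le[OF assms] by simp
  then have "ereal R \<le> liminf (\<lambda>n. neglog (err_prob B w nu dec j n) / ereal (real B * real n))"
    using \<open>B > 0\<close> by (intro liminf_neglog_div_ge) (simp_all add: err_prob_def)
  then show "ereal R \<le> err_exponent B w nu dec j"
    by (simp add: err_exponent_def)
qed

end
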